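(* Let a target $T$ be fixed at a point $(x_T,y_T)\in\mathbb{R}^2$, and consider a UAV with dynamics $\dot x=V\cos\psi$, $\dot y=V\sin\psi$, $\dot\psi=\omega$, $V>0$ constant. Let $r(t)$ be the distance from the UAV to $T$ and $\theta(t)\in[0,2\pi)$ the bearing angle. Let the control input be $$\omega=\begin{cases} k\left[V\cos\!\left(\pi-\sin^{-1}\!\left(\frac{r_a}{r(t)}\right)\right)-\dot r(t)\right], & r(t)\ge r_a,\\ 0,&\text{otherwise},\end{cases}$$ with constants $k>0$ and $r_a\ge 0$. Then for any initial bearing $\theta(0)$ there exists $t^\star\ge 0$ such that $\theta(t)\in[0,\pi]$ for all $t\ge t^\star$.
   Context: The bearing angle $\theta(t)\in[0,2\pi)$ is the angle measured counterclockwise from the vector pointing from the UAV's current position to $T$ to the UAV's current heading $(\cos\psi,\sin\psi)$. In these variables the dynamics read $\dot r=-V\cos\theta$, $\dot\theta=\omega+\frac{V\sin\theta}{r}$. $\sin^{-1}$ is the principal arcsine. *)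

theory Defs
  imports "HOL-Analysis.Analysis"
begin

definition bearing :: "real \<Rightarrow> real" where
  "bearing a = a - 2 * pi * of_int \<lfloor>a / (2 * pi)\<rfloor>"

definition ctrl :: "real \<Rightarrow> real \<Rightarrow> real \<Rightarrow> real \<Rightarrow> real \<Rightarrow> real" where
  "ctrl k V ra rr rd =
     (if rr \<ge> ra then k * (V * cos (pi - arcsin (ra / rr)) - rd) else 0)"

end

theory Submission
  imports Defs
begin

text \<open>
  Let th be the continuous lift of the bearing angle, so th' = \<omega> + V sin th / r. Every band
  [2\<pi>m, 2\<pi>m + \<pi>] is forward invariant: just above its top edge sin th and cos th are both
  negative, so both terms of th' are negative; just below its bottom edge th' is bounded below by a
  linear function of the distance to the edge, and a Gronwall barrier keeps th in the band.
  If th never entered a band, by the intermediate value theorem it would stay in some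
  (2\<pi>m - \<pi>, 2\<pi>m). While th - 2\<pi>m \<ge> -\<pi>/2 the range does not grow and
  th + (k + 1/r 0) r decreases at rate at least V / r 0, impossible for a bounded quantity.
  Once th - 2\<pi>m < -\<pi>/2 it stays below that value, so the range grows linearly beyond ra; from
  then on the control turns th down at a uniform rate and th leaves (2\<pi>m - \<pi>, 2\<pi>m).
\<close>

lemma last_crossing:
  fixes g :: "real \<Rightarrow> real"
  assumes "a \<le> b" and cont: "continuous_on {a..b} g" and "g a \<le> y" "y < g b"
  obtains m where "m \<in> {a..<b}" "g m = y" "\<forall>t\<in>{m<..b}. y < g t"
proof -
  let ?K = "{a..b} \<inter> g -` {..y}"
  have "closed ?K"
    by (rule continuous_closed_preimage[OF cont]) auto
  then have "compact ?K"
    by (simp add: compact_eq_bounded_closed bounded_Int)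
  moreover have "a \<in> ?K" using assms by auto
  ultimately obtain m where mK: "m \<in> ?K" and m_max: "\<forall>t\<in>?K. t \<le> m"
    using compact_attains_sup by blast
  have above: "y < g t" if "t \<in> {m<..b}" for t
  proof (rule ccontr)
    assume "\<not> y < g t"
    then have "t \<in> ?K" using mK that by auto
    then have "t \<le> m" using m_max by blast
    then show False using that by simp
  qed
  have "m < b" using mK assms by (cases "m = b") auto
  moreover have "g m = y"
  proof (rule ccontr)
    assume "g m \<noteq> y"
    then have "g m < y" using mK by auto
    then obtain s where "s \<in> {m..b}" "g s = y"
      using IVT'[of g m y b] mK assms continuous_on_subset[OF cont, of "{m..b}"] by auto
    then show False using above[of s] \<open>g m < y\<close> by (cases "s = m") auto
  qed
  ultimately show thesis using that above mK by auto
qed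

lemma DERIV_neg_imp_nonincreasing_countable:
  fixes g g' :: "real \<Rightarrow> real"
  assumes "a \<le> b" and cont: "continuous_on {a..b} g" and "countable S"
    and deriv: "\<And>x. x \<in> {a..b} - S \<Longrightarrow> (g has_real_derivative g' x) (at x within {a..b})"
    and neg: "\<And>x. x \<in> {a..b} - S \<Longrightarrow> g' x < 0"
  shows "g b \<le> g a"
proof (rule ccontr)
  assume "\<not> g b \<le> g a"
  have "\<exists>m. m \<in> {a..<b} \<and> g m = y \<and> (\<forall>t\<in>{m<..b}. y < g t)" if "y \<in> {g a<..<g b}" for y
    using last_crossing[OF \<open>a \<le> b\<close> cont, of y] that by (metis greaterThanLessThan_iff less_le)
  then obtain m where m: "\<And>y. y \<in> {g a<..<g b} \<Longrightarrow>
      m y \<in> {a..<b} \<and> g (m y) = y \<and> (\<forall>t\<in>{m y<..b}. y < g t)"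
    by metis
  \<comment> \<open>the last crossings of the levels in (g a, g b) are distinct points of S\<close>
  have "m y \<in> S" if y: "y \<in> {g a<..<g b}" for y
  proof (rule ccontr)
    assume "m y \<notin> S"
    with m[OF y] have x: "m y \<in> {a..b} - S" by auto
    obtain d where "d > 0" and d: "\<And>h. 0 < h \<Longrightarrow> m y + h \<in> {a..b} \<Longrightarrow> h < d \<Longrightarrow> g (m y + h) < g (m y)"
      using has_real_derivative_neg_dec_right[OF deriv[OF x] neg[OF x]] by metis
    define h where "h = min d (b - m y) / 2"
    have "0 < h" "h < d" "m y + h \<in> {m y<..b}" using \<open>d > 0\<close> m[OF y] by (auto simp: h_def min_def field_simps)
    then show False using d[of h] m[OF y] by force
  qed
  moreover have "inj_on m {g a<..<g b}"
    using m by (metis inj_onI)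
  ultimately have "countable {g a<..<g b}"
    using \<open>countable S\<close> by (metis countable_image_inj_on countable_subset image_subsetI)
  then show False using \<open>\<not> g b \<le> g a\<close> uncountable_open_interval[of "g a" "g b"] by auto
qed

lemma DERIV_le_imp_increment_le_countable:
  fixes f f' :: "real \<Rightarrow> real"
  assumes "a \<le> b" and cont: "continuous_on {a..b} f" and "countable S"
    and deriv: "\<And>x. x \<in> {a..b} - S \<Longrightarrow> (f has_real_derivative f' x) (at x within {a..b})"
    and le: "\<And>x. x \<in> {a..b} - S \<Longrightarrow> f' x \<le> C"
  shows "f b - f a \<le> C * (b - a)"
proof (rule ccontr)
  assume gt: "\<not> f b - f a \<le> C * (b - a)"
  then have "a < b" using \<open>a \<le> b\<close> by (cases "a = b") auto
  define c where "c = (f b - f a - C * (b - a)) / (2 * (b - a))"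
  have "c > 0" using gt \<open>a < b\<close> by (simp add: c_def)
  have "(\<lambda>t. f t - (C + c) * t) b \<le> (\<lambda>t. f t - (C + c) * t) a"
  proof (rule DERIV_neg_imp_nonincreasing_countable[OF \<open>a \<le> b\<close> _ \<open>countable S\<close>])
    show "continuous_on {a..b} (\<lambda>t. f t - (C + c) * t)"
      by (intro continuous_intros cont)
    fix x assume x: "x \<in> {a..b} - S"
    show "((\<lambda>t. f t - (C + c) * t) has_real_derivative f' x - (C + c)) (at x within {a..b})"
      using deriv[OF x] by (auto intro!: derivative_eq_intros)
    show "f' x - (C + c) < 0" using le[OF x] \<open>c > 0\<close> by simp
  qed
  then have "f b - f a \<le> (C + c) * (b - a)" by (simp add: algebra_simps)
  moreover have "2 * ((C + c) * (b - a)) = C * (b - a) + (f b - f a)"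
    using \<open>a < b\<close> by (simp add: c_def field_simps)
  ultimately show False using gt by linarith
qed

lemma DERIV_upper_barrier_countable:
  fixes f f' :: "real \<Rightarrow> real"
  assumes "a \<le> b" and cont: "continuous_on {a..b} f" and "countable S"
    and deriv: "\<And>x. x \<in> {a..b} - S \<Longrightarrow> (f has_real_derivative f' x) (at x within {a..b})"
    and "f a \<le> p" and "\<eta> > 0"
    and bound: "\<And>x. x \<in> {a..b} - S \<Longrightarrow> p < f x \<Longrightarrow> f x < p + \<eta> \<Longrightarrow> f' x \<le> L * (f x - p)"
  shows "f b \<le> p"
proof (rule ccontr)
  assume "\<not> f b \<le> p"
  then obtain u where u: "u \<in> {a..<b}" "f u = p" and above: "\<forall>t\<in>{u<..b}. p < f t"
    using last_crossing[OF \<open>a \<le> b\<close> cont \<open>f a \<le> p\<close>] by auto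
  have "u \<in> {a..b}" using u(1) by auto
  then obtain d where "d > 0" and d: "\<forall>t\<in>{a..b}. dist t u < d \<longrightarrow> dist (f t) (f u) < \<eta>"
    using cont \<open>\<eta> > 0\<close> unfolding continuous_on_iff by blast
  define v where "v = min (u + d / 2) b"
  have "u < v" "{u..v} \<subseteq> {a..b}" using u(1) \<open>d > 0\<close> by (auto simp: v_def)
  have near: "f t < p + \<eta>" if t: "t \<in> {u..v}" for t
  proof -
    have "dist t u < d" using t \<open>d > 0\<close> by (auto simp: v_def dist_real_def)
    then have "dist (f t) p < \<eta>" using d t \<open>{u..v} \<subseteq> {a..b}\<close> u(2) by auto
    then show ?thesis by (simp add: dist_real_def)
  qed
  \<comment> \<open>Gronwall: exp (- L t) (f t - p) cannot increase while f stays in (p, p + \<eta>)\<close>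
  define g where "g t = exp (- L * t) * (f t - p)" for t
  have "g v - g u \<le> 0 * (v - u)"
  proof (rule DERIV_le_imp_increment_le_countable[of u v g "insert u S" "\<lambda>t. exp (- L * t) * (f' t - L * (f t - p))"])
    show "continuous_on {u..v} g" unfolding g_def
      by (intro continuous_intros continuous_on_subset[OF cont \<open>{u..v} \<subseteq> {a..b}\<close>])
    fix x assume x: "x \<in> {u..v} - insert u S"
    then have "x \<in> {a..b} - S" using \<open>{u..v} \<subseteq> {a..b}\<close> by auto
    show "(g has_real_derivative exp (- L * x) * (f' x - L * (f x - p))) (at x within {u..v})"
      unfolding g_def using DERIV_subset[OF deriv[OF \<open>x \<in> {a..b} - S\<close>] \<open>{u..v} \<subseteq> {a..b}\<close>]
      by (auto intro!: derivative_eq_intros simp: algebra_simps)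
    have "f' x \<le> L * (f x - p)"
      using bound[OF \<open>x \<in> {a..b} - S\<close>] above near x \<open>u < v\<close> \<open>{u..v} \<subseteq> {a..b}\<close> by auto
    then show "exp (- L * x) * (f' x - L * (f x - p)) \<le> 0"
      by (simp add: mult_nonneg_nonpos)
  qed (use \<open>u < v\<close> \<open>countable S\<close> in auto)
  moreover have "g v > 0" "g u = 0"
    using above \<open>u < v\<close> \<open>{u..v} \<subseteq> {a..b}\<close> u(2) by (auto simp: g_def)
  ultimately show False by simp
qed

lemma ctrl_range_rate:
  assumes "ra \<le> rr"
  shows "ctrl k V ra rr (- V * cos x) = k * V * (cos x - cos (arcsin (ra / rr)))"
  using assms by (simp add: ctrl_def algebra_simps)

lemma cos_arcsin_ratio_bounds:
  fixes ra rr :: real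
  assumes "0 \<le> ra" "ra \<le> rr"
  shows "0 \<le> cos (arcsin (ra / rr))" "cos (arcsin (ra / rr)) \<le> 1"
proof -
  have "0 \<le> ra / rr" "ra / rr \<le> 1" using assms by (auto simp: divide_le_eq_1)
  then show "0 \<le> cos (arcsin (ra / rr))"
    using arcsin_lbound arcsin_ubound by (intro cos_ge_zero) auto
qed simp

lemma ctrl_le_cos:
  assumes "0 \<le> ra" "ra \<le> rr" "0 \<le> k" "0 \<le> V"
  shows "ctrl k V ra rr (- V * cos x) \<le> k * V * cos x"
  unfolding ctrl_range_rate[OF assms(2)]
  using cos_arcsin_ratio_bounds(1)[OF assms(1,2)] assms(3,4)
  by (intro mult_left_mono) auto

lemma ctrl_le_max_cos:
  assumes "0 \<le> ra" "0 \<le> k" "0 \<le> V"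
  shows "ctrl k V ra rr (- V * cos x) \<le> k * V * max (cos x) 0"
proof (cases "ra \<le> rr")
  case True
  have "ctrl k V ra rr (- V * cos x) \<le> k * V * cos x"
    by (rule ctrl_le_cos[OF assms(1) True assms(2,3)])
  also have "\<dots> \<le> k * V * max (cos x) 0"
    using assms by (intro mult_left_mono) auto
  finally show ?thesis .
qed (use assms in \<open>simp add: ctrl_def\<close>)

lemma ctrl_ge_cos_minus_one:
  assumes "0 \<le> ra" "0 \<le> k" "0 \<le> V"
  shows "k * V * (cos x - 1) \<le> ctrl k V ra rr (- V * cos x)"
proof (cases "ra \<le> rr")
  case True
  have "cos x - 1 \<le> cos x - cos (arcsin (ra / rr))"
    using cos_arcsin_ratio_bounds(2)[OF assms(1) True] by simp
  then have "k * V * (cos x - 1) \<le> k * V * (cos x - cos (arcsin (ra / rr)))"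
    using assms(2,3) by (simp add: mult_left_mono)
  then show ?thesis by (simp only: ctrl_range_rate[OF True])
next
  case False
  then show ?thesis using assms by (simp add: ctrl_def mult_nonneg_nonpos)
qed

lemma sin_le_cos_minus_one:
  assumes "-(pi/2) \<le> x" "x \<le> 0"
  shows "sin x \<le> cos x - 1"
proof -
  have "0 \<le> cos x" using assms by (intro cos_ge_zero) auto
  then have "cos x * cos x \<le> cos x * 1" by (intro mult_left_mono) simp_all
  moreover have "(1 - cos x)\<^sup>2 = 1 - 2 * cos x + cos x * cos x"
    by (simp add: power2_eq_square algebra_simps)
  moreover have "(sin x)\<^sup>2 = 1 - cos x * cos x"
    using sin_cos_squared_add[of x] unfolding power2_eq_square by linarith
  ultimately have "(1 - cos x)\<^sup>2 \<le> \<bar>sin x\<bar>\<^sup>2" by simp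
  then have "1 - cos x \<le> \<bar>sin x\<bar>" by (rule power2_le_imp_le) simp
  moreover have "sin x \<le> 0" using sin_ge_zero[of "- x"] assms by simp
  ultimately show ?thesis by simp
qed

lemma bearing_in_band:
  fixes m :: int
  assumes "x \<in> {2 * pi * m .. 2 * pi * m + pi}"
  shows "bearing x \<in> {0..pi}"
proof -
  have "2 * pi * m \<le> x" "x \<le> 2 * pi * m + pi" using assms by simp_all
  then have "2 * pi * m \<le> x" "x < 2 * pi * m + 2 * pi" using pi_gt_zero by linarith+
  then have "m \<le> x / (2 * pi)" "x / (2 * pi) < m + 1"
    by (simp_all add: field_simps)
  then have "\<lfloor>x / (2 * pi)\<rfloor> = m" by (simp add: floor_eq_iff)
  then show ?thesis using assms by (simp add: bearing_def)
qed

definition turn_rate :: "real \<Rightarrow> real \<Rightarrow> real \<Rightarrow> real \<Rightarrow> real \<Rightarrow> real" where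
  "turn_rate k V ra \<rho> \<theta> = ctrl k V ra \<rho> (- V * cos \<theta>) + V * sin \<theta> / \<rho>"

lemma turn_rate_neg:
  assumes "0 < V" "0 < k" "0 \<le> ra" "0 < \<rho>" "cos \<theta> < 0" "sin \<theta> < 0"
  shows "turn_rate k V ra \<rho> \<theta> < 0"
proof -
  have "ctrl k V ra \<rho> (- V * cos \<theta>) \<le> k * V * max (cos \<theta>) 0"
    using assms by (intro ctrl_le_max_cos) simp_all
  then have "ctrl k V ra \<rho> (- V * cos \<theta>) \<le> 0" using assms(5) by simp
  moreover have "V * sin \<theta> / \<rho> < 0"
    using assms by (simp add: divide_neg_pos mult_pos_neg)
  ultimately show ?thesis by (simp add: turn_rate_def)
qed

lemma turn_rate_lt_k_cos:
  assumes "0 < V" "0 < k" "0 \<le> ra" "0 < \<rho>" "ra \<le> \<rho>" "sin \<theta> < 0"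
  shows "turn_rate k V ra \<rho> \<theta> < k * V * cos \<theta>"
proof -
  have "ctrl k V ra \<rho> (- V * cos \<theta>) \<le> k * V * cos \<theta>"
    using assms by (intro ctrl_le_cos) simp_all
  moreover have "V * sin \<theta> / \<rho> < 0"
    using assms by (simp add: divide_neg_pos mult_pos_neg)
  ultimately show ?thesis by (simp add: turn_rate_def)
qed

lemma turn_rate_ge:
  fixes m :: int
  assumes "0 < V" "0 < k" "0 \<le> ra" "0 < \<sigma>" "\<sigma> \<le> \<rho>"
    and "-(pi/2) \<le> \<theta> - 2 * pi * m" "\<theta> - 2 * pi * m \<le> 0"
  shows "(k * V + V / \<sigma>) * (\<theta> - 2 * pi * m) \<le> turn_rate k V ra \<rho> \<theta>"
proof -
  define \<phi> where "\<phi> = \<theta> - 2 * pi * m"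
  have trig: "sin \<theta> = sin \<phi>" "cos \<theta> = cos \<phi>"
    by (simp_all add: \<phi>_def sin_diff cos_diff)
  have \<phi>: "-(pi/2) \<le> \<phi>" "\<phi> \<le> 0" using assms(6,7) by (simp_all add: \<phi>_def)
  have sin_ge: "\<phi> \<le> sin \<phi>" using sin_x_le_x[of "- \<phi>"] \<phi>(2) by simp
  have "\<phi> \<le> cos \<phi> - 1" using sin_ge sin_le_cos_minus_one[OF \<phi>] by linarith
  then have "k * V * \<phi> \<le> k * V * (cos \<phi> - 1)"
    using assms(1,2) by (intro mult_left_mono) simp_all
  also have "\<dots> \<le> ctrl k V ra \<rho> (- V * cos \<theta>)"
    unfolding trig(2) using assms(1-3) by (intro ctrl_ge_cos_minus_one) simp_all
  finally have ctrl_ge: "k * V * \<phi> \<le> ctrl k V ra \<rho> (- V * cos \<theta>)" .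
  have "\<phi> / \<sigma> \<le> \<phi> / \<rho>"
    using assms(4,5) \<phi>(2) by (intro divide_left_mono_neg) simp_all
  also have "\<dots> \<le> sin \<phi> / \<rho>"
    using sin_ge assms(4,5) by (simp add: divide_right_mono)
  finally have "V * (\<phi> / \<sigma>) \<le> V * (sin \<theta> / \<rho>)"
    unfolding trig(1) using assms(1) by (intro mult_left_mono) simp_all
  moreover have "(k * V + V / \<sigma>) * \<phi> = k * V * \<phi> + V * (\<phi> / \<sigma>)"
    by (simp add: algebra_simps)
  ultimately show ?thesis using ctrl_ge by (simp add: turn_rate_def \<phi>_def)
qed

lemma turn_rate_le_approach:
  fixes m :: int
  assumes "0 < V" "0 < k" "0 \<le> ra" "0 < \<rho>" "\<rho> \<le> R"
    and "-(pi/2) \<le> \<theta> - 2 * pi * m" "\<theta> - 2 * pi * m \<le> 0"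
  shows "turn_rate k V ra \<rho> \<theta> \<le> (k + 1 / R) * V * cos \<theta> - V / R"
proof -
  define \<phi> where "\<phi> = \<theta> - 2 * pi * m"
  have trig: "sin \<theta> = sin \<phi>" "cos \<theta> = cos \<phi>"
    by (simp_all add: \<phi>_def sin_diff cos_diff)
  have \<phi>: "-(pi/2) \<le> \<phi>" "\<phi> \<le> 0" using assms(6,7) by (simp_all add: \<phi>_def)
  have R: "0 < R" using assms(4,5) by simp
  have "0 \<le> cos \<phi>" using \<phi> by (intro cos_ge_zero) simp_all
  have "sin \<phi> \<le> 0" using sin_ge_zero[of "- \<phi>"] \<phi> by simp
  have "ctrl k V ra \<rho> (- V * cos \<theta>) \<le> k * V * max (cos \<theta>) 0"
    using assms(1-3) by (intro ctrl_le_max_cos) simp_all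
  then have ctrl_le: "ctrl k V ra \<rho> (- V * cos \<theta>) \<le> k * V * cos \<theta>"
    using \<open>0 \<le> cos \<phi>\<close> trig(2) by simp
  have "sin \<phi> / \<rho> \<le> sin \<phi> / R"
    using \<open>sin \<phi> \<le> 0\<close> assms(4,5) by (intro divide_left_mono_neg) simp_all
  also have "\<dots> \<le> (cos \<phi> - 1) / R"
    using sin_le_cos_minus_one[OF \<phi>] R by (simp add: divide_right_mono)
  finally have "V * (sin \<theta> / \<rho>) \<le> V * ((cos \<theta> - 1) / R)"
    unfolding trig using assms(1) by (intro mult_left_mono) simp_all
  also have "\<dots> = V / R * cos \<theta> - V / R"
    using R by (simp add: field_simps)
  finally have "V * sin \<theta> / \<rho> \<le> V / R * cos \<theta> - V / R"
    by simp
  moreover have "(k + 1 / R) * V * cos \<theta> = k * V * cos \<theta> + V / R * cos \<theta>"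
    by (simp add: algebra_simps)
  ultimately show ?thesis using ctrl_le unfolding turn_rate_def by linarith
qed

definition guided_engagement ::
    "real \<Rightarrow> real \<Rightarrow> real \<Rightarrow> (real \<Rightarrow> real) \<Rightarrow> (real \<Rightarrow> real) \<Rightarrow> real set \<Rightarrow> bool" where
  "guided_engagement V k ra r th S \<longleftrightarrow>
     0 < V \<and> 0 < k \<and> 0 \<le> ra \<and> (\<forall>t\<ge>0. 0 < r t) \<and>
     continuous_on {0..} r \<and> continuous_on {0..} th \<and> countable S \<and>
     (\<forall>t\<in>{0..} - S. (r has_real_derivative - V * cos (th t)) (at t within {0..})) \<and>
     (\<forall>t\<in>{0..} - S. (th has_real_derivative turn_rate k V ra (r t) (th t)) (at t within {0..}))"

lemma range_pos: "guided_engagement V k ra r th S \<Longrightarrow> 0 \<le> t \<Longrightarrow> 0 < r t"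
  by (simp add: guided_engagement_def)

lemma
  assumes "guided_engagement V k ra r th S" "0 \<le> a"
  shows range_cont_on: "continuous_on {a..b} r"
    and bearing_cont_on: "continuous_on {a..b} th"
  using assms continuous_on_subset[of "{0..}" _ "{a..b}"] by (auto simp: guided_engagement_def)

lemma
  assumes "guided_engagement V k ra r th S" "0 \<le> a" "x \<in> {a..b} - S"
  shows range_deriv_on: "(r has_real_derivative - V * cos (th x)) (at x within {a..b})"
    and bearing_deriv_on: "(th has_real_derivative turn_rate k V ra (r x) (th x)) (at x within {a..b})"
  using assms DERIV_subset[of _ _ x "{0..}" "{a..b}"] by (force simp: guided_engagement_def)+

lemma band_top_invariant:
  fixes m :: int
  assumes E: "guided_engagement V k ra r th S" and "0 \<le> t0" "t0 \<le> t" "th t0 \<le> 2 * pi * m + pi"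
  shows "th t \<le> 2 * pi * m + pi"
proof (rule DERIV_upper_barrier_countable[where a = t0 and b = t and f = th
      and f' = "\<lambda>x. turn_rate k V ra (r x) (th x)" and \<eta> = "pi/2" and L = 0])
  fix x assume x: "x \<in> {t0..t} - S"
    and above: "2 * pi * m + pi < th x" "th x < 2 * pi * m + pi + pi/2"
  define \<psi> where "\<psi> = th x - 2 * pi * m - pi"
  have "0 < \<psi>" "\<psi> < pi/2" using above by (auto simp: \<psi>_def)
  moreover have "sin (th x) = - sin \<psi>" "cos (th x) = - cos \<psi>"
    by (simp_all add: \<psi>_def sin_diff cos_diff)
  ultimately have "sin (th x) < 0" "cos (th x) < 0"
    using sin_gt_zero[of \<psi>] cos_gt_zero[of \<psi>] by auto
  moreover have "0 < r x" using range_pos[OF E] x assms(2) by simp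
  ultimately have "turn_rate k V ra (r x) (th x) < 0"
    using E by (intro turn_rate_neg) (simp_all add: guided_engagement_def)
  then show "turn_rate k V ra (r x) (th x) \<le> 0 * (th x - (2 * pi * m + pi))" by simp
next
  fix x assume "x \<in> {t0..t} - S"
  then show "(th has_real_derivative turn_rate k V ra (r x) (th x)) (at x within {t0..t})"
    by (rule bearing_deriv_on[OF E assms(2)])
qed (use assms bearing_cont_on[OF E] in \<open>simp_all add: guided_engagement_def\<close>)

lemma band_bottom_invariant:
  fixes m :: int
  assumes E: "guided_engagement V k ra r th S" and "0 \<le> t0" "t0 \<le> t" "2 * pi * m \<le> th t0"
  shows "2 * pi * m \<le> th t"
proof -
  obtain xm where "xm \<in> {t0..t}" and xm_min: "\<forall>s\<in>{t0..t}. r xm \<le> r s"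
    using continuous_attains_inf[of "{t0..t}" r] range_cont_on[OF E assms(2)] assms(3) by auto
  define \<sigma> where "\<sigma> = r xm"
  have "0 < \<sigma>" using range_pos[OF E] \<open>xm \<in> {t0..t}\<close> assms(2) by (auto simp: \<sigma>_def)
  have "(\<lambda>s. - th s) t \<le> - (2 * pi * m)"
  proof (rule DERIV_upper_barrier_countable[where a = t0 and b = t and f = "\<lambda>s. - th s"
        and f' = "\<lambda>s. - turn_rate k V ra (r s) (th s)" and \<eta> = "pi/2" and L = "k * V + V / \<sigma>"])
    show "continuous_on {t0..t} (\<lambda>s. - th s)"
      by (intro continuous_intros bearing_cont_on[OF E assms(2)])
    fix x assume x: "x \<in> {t0..t} - S"
    then show "((\<lambda>s. - th s) has_real_derivative - turn_rate k V ra (r x) (th x)) (at x within {t0..t})"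
      using bearing_deriv_on[OF E assms(2)] by (auto intro!: derivative_eq_intros)
    assume below: "- (2 * pi * m) < - th x" "- th x < - (2 * pi * m) + pi/2"
    have "\<sigma> \<le> r x" using x xm_min by (auto simp: \<sigma>_def)
    then have "(k * V + V / \<sigma>) * (th x - 2 * pi * m) \<le> turn_rate k V ra (r x) (th x)"
      using below \<open>0 < \<sigma>\<close> E by (intro turn_rate_ge) (simp_all add: guided_engagement_def)
    then show "- turn_rate k V ra (r x) (th x) \<le> (k * V + V / \<sigma>) * (- th x - - (2 * pi * m))"
      by (simp add: algebra_simps)
  qed (use assms in \<open>simp_all add: guided_engagement_def\<close>)
  then show ?thesis by simp
qed

lemma band_invariant:
  fixes m :: int
  assumes "guided_engagement V k ra r th S" "0 \<le> t0" "t0 \<le> t"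
    and "th t0 \<in> {2 * pi * m .. 2 * pi * m + pi}"
  shows "th t \<in> {2 * pi * m .. 2 * pi * m + pi}"
  using band_top_invariant[OF assms(1-3)] band_bottom_invariant[OF assms(1-3)] assms(4) by auto

lemma confined_if_never_in_band:
  assumes E: "guided_engagement V k ra r th S"
    and never: "\<And>t m. 0 \<le> t \<Longrightarrow> th t \<notin> {2 * pi * of_int m .. 2 * pi * of_int m + pi}"
  obtains m :: int where "\<And>t. 0 \<le> t \<Longrightarrow> th t - 2 * pi * m \<in> {-pi<..<0}"
proof
  define m :: int where "m = \<lfloor>th 0 / (2 * pi)\<rfloor> + 1"
  have "of_int (m - 1) \<le> th 0 / (2 * pi)" "th 0 / (2 * pi) < of_int m"
    unfolding m_def by simp_all
  then have floor_bounds: "2 * pi * (m - 1) \<le> th 0" "th 0 < 2 * pi * m"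
    by (simp_all add: field_simps)
  then have "2 * pi * m - pi < th 0"
    using never[of 0 "m - 1"] by (auto simp: algebra_simps)
  fix t :: real assume "0 \<le> t"
  have cont: "continuous_on {0..t} th" by (rule bearing_cont_on[OF E]) simp
  show "th t - 2 * pi * m \<in> {-pi<..<0}"
  proof (rule ccontr)
    assume "th t - 2 * pi * m \<notin> {-pi<..<0}"
    then consider "th t \<le> 2 * pi * m - pi" | "2 * pi * m \<le> th t" by fastforce
    then obtain s where "0 \<le> s" "s \<le> t" "th s = 2 * pi * m - pi \<or> th s = 2 * pi * m"
    proof cases
      case 1
      then show ?thesis
        using IVT2'[of th t "2 * pi * m - pi" 0] that \<open>2 * pi * m - pi < th 0\<close> \<open>0 \<le> t\<close> cont
        by auto
    next
      case 2
      then show ?thesis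
        using IVT'[of th 0 "2 * pi * m" t] that floor_bounds \<open>0 \<le> t\<close> cont by auto
    qed
    moreover have "2 * pi * m - pi \<in> {2 * pi * of_int (m - 1) .. 2 * pi * of_int (m - 1) + pi}"
      by (simp add: algebra_simps)
    ultimately show False
      using never[of s "m - 1"] never[of s m] by auto
  qed
qed

lemma leaves_fourth_quadrant:
  fixes m :: int
  assumes E: "guided_engagement V k ra r th S"
    and lower_half: "\<And>t. 0 \<le> t \<Longrightarrow> th t - 2 * pi * m \<in> {-pi<..<0}"
  obtains t where "0 \<le> t" "th t - 2 * pi * m < -(pi/2)"
proof (rule ccontr)
  assume "\<not> thesis"
  with that have confined: "\<And>t. 0 \<le> t \<Longrightarrow> th t - 2 * pi * m \<in> {-(pi/2)..0}"
    using lower_half by force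
  have V: "0 < V" and k: "0 < k" and S: "countable S" using E by (simp_all add: guided_engagement_def)
  define R where "R = r 0"
  have "0 < R" using range_pos[OF E] by (simp add: R_def)
  have cos_nonneg: "0 \<le> cos (th t)" if "0 \<le> t" for t
    using confined[OF that] cos_ge_zero[of "th t - 2 * pi * m"] by (simp add: cos_diff)
  have r_le: "r t \<le> R" if "0 \<le> t" for t
    using DERIV_le_imp_increment_le_countable[OF that range_cont_on[OF E] S range_deriv_on[OF E], of 0]
      cos_nonneg V by (fastforce simp: R_def)
  define c where "c = k + 1 / R"
  \<comment> \<open>long enough for the decrease V T / R to exceed the oscillation of th + c r\<close>
  define T where "T = R * (k * R + 2 + pi) / V"
  have "0 \<le> T" using \<open>0 < R\<close> k V by (simp add: T_def)
  have "(\<lambda>s. th s + c * r s) T - (\<lambda>s. th s + c * r s) 0 \<le> (- V / R) * (T - 0)"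
  proof (rule DERIV_le_imp_increment_le_countable[OF \<open>0 \<le> T\<close> _ S])
    show "continuous_on {0..T} (\<lambda>s. th s + c * r s)"
      by (intro continuous_intros bearing_cont_on[OF E] range_cont_on[OF E]) simp_all
    fix x assume x: "x \<in> {0..T} - S"
    then show "((\<lambda>s. th s + c * r s) has_real_derivative
        turn_rate k V ra (r x) (th x) + c * (- V * cos (th x))) (at x within {0..T})"
      using bearing_deriv_on[OF E, of 0 x T] range_deriv_on[OF E, of 0 x T]
      by (auto intro!: derivative_eq_intros)
    have "turn_rate k V ra (r x) (th x) \<le> (k + 1 / R) * V * cos (th x) - V / R"
      using x confined[of x] r_le[of x] range_pos[OF E, of x] E
      by (intro turn_rate_le_approach[where m = m]) (auto simp: guided_engagement_def)
    then show "turn_rate k V ra (r x) (th x) + c * (- V * cos (th x)) \<le> - V / R"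
      by (simp add: c_def algebra_simps)
  qed
  moreover have "(- V / R) * (T - 0) = - (k * R + 2 + pi)"
    using \<open>0 < R\<close> V by (simp add: T_def field_simps)
  moreover have "c * R = k * R + 1" using \<open>0 < R\<close> by (simp add: c_def field_simps)
  moreover have "0 < c * r T"
    using \<open>0 < R\<close> k range_pos[OF E \<open>0 \<le> T\<close>] by (simp add: c_def add_pos_pos)
  ultimately show False
    using confined[of 0] confined[OF \<open>0 \<le> T\<close>] pi_gt_zero by (simp add: R_def)
qed

lemma cos_le_while_stuck_below:
  fixes m :: int
  assumes E: "guided_engagement V k ra r th S"
    and confined: "\<And>t. 0 \<le> t \<Longrightarrow> th t - 2 * pi * m \<in> {-pi<..<0}"
    and "0 \<le> t1" "th t1 - 2 * pi * m < -(pi/2)" "t1 \<le> t"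
  shows "cos (th t) \<le> cos (th t1)"
proof -
  have "th t \<le> th t1"
  proof (rule DERIV_upper_barrier_countable[where a = t1 and b = t and f = th
        and f' = "\<lambda>x. turn_rate k V ra (r x) (th x)"
        and \<eta> = "- (pi/2) - (th t1 - 2 * pi * m)" and L = 0])
    fix x assume x: "x \<in> {t1..t} - S"
      and between: "th t1 < th x" "th x < th t1 + (- (pi/2) - (th t1 - 2 * pi * m))"
    define \<psi> where "\<psi> = th x - 2 * pi * m + pi"
    have "0 \<le> x" using x assms(3) by simp
    then have "0 < \<psi>" "\<psi> < pi/2" using confined[of x] between by (auto simp: \<psi>_def)
    moreover have "sin (th x) = - sin \<psi>" "cos (th x) = - cos \<psi>"
      by (simp_all add: \<psi>_def sin_add cos_add sin_diff cos_diff)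
    ultimately have "sin (th x) < 0" "cos (th x) < 0"
      using sin_gt_zero[of \<psi>] cos_gt_zero[of \<psi>] by auto
    then have "turn_rate k V ra (r x) (th x) < 0"
      using range_pos[OF E \<open>0 \<le> x\<close>] E by (intro turn_rate_neg) (simp_all add: guided_engagement_def)
    then show "turn_rate k V ra (r x) (th x) \<le> 0 * (th x - th t1)" by simp
  next
    fix x assume "x \<in> {t1..t} - S"
    then show "(th has_real_derivative turn_rate k V ra (r x) (th x)) (at x within {t1..t})"
      by (rule bearing_deriv_on[OF E assms(3)])
  qed (use assms bearing_cont_on[OF E] in \<open>simp_all add: guided_engagement_def\<close>)
  then have "cos (- (th t - 2 * pi * m)) \<le> cos (- (th t1 - 2 * pi * m))"
    using confined[of t] confined[OF assms(3)] assms(3,5) by (intro cos_monotone_0_pi_le) auto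
  then show ?thesis by (simp add: cos_diff)
qed

lemma eventually_range_ge_ra:
  assumes E: "guided_engagement V k ra r th S"
    and "0 \<le> t1" "0 < c" "\<And>t. t1 \<le> t \<Longrightarrow> cos (th t) \<le> - c"
  obtains t3 where "t1 \<le> t3" "\<And>t. t3 \<le> t \<Longrightarrow> ra \<le> r t"
proof
  have V: "0 < V" and ra: "0 \<le> ra" and S: "countable S" using E by (simp_all add: guided_engagement_def)
  have "0 < V * c" using V \<open>0 < c\<close> by simp
  then have "0 \<le> ra / (V * c)" using ra by simp
  then show "t1 \<le> t1 + ra / (V * c)" by simp
  fix t assume t: "t1 + ra / (V * c) \<le> t"
  with \<open>0 \<le> ra / (V * c)\<close> have "t1 \<le> t" by linarith
  have "(\<lambda>s. - r s) t - (\<lambda>s. - r s) t1 \<le> (- (V * c)) * (t - t1)"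
  proof (rule DERIV_le_imp_increment_le_countable[OF \<open>t1 \<le> t\<close> _ S])
    show "continuous_on {t1..t} (\<lambda>s. - r s)"
      by (intro continuous_intros range_cont_on[OF E assms(2)])
    fix x assume x: "x \<in> {t1..t} - S"
    then show "((\<lambda>s. - r s) has_real_derivative V * cos (th x)) (at x within {t1..t})"
      using range_deriv_on[OF E assms(2)] by (auto intro!: derivative_eq_intros)
    show "V * cos (th x) \<le> - (V * c)"
      using mult_left_mono[OF assms(4)[of x] less_imp_le[OF V]] x by simp
  qed
  moreover have "ra / (V * c) \<le> t - t1" using t by simp
  then have "ra \<le> (t - t1) * (V * c)" using \<open>0 < V * c\<close> by (simp add: pos_divide_le_eq)
  then have "ra \<le> V * c * (t - t1)" by (simp add: mult.commute)
  ultimately show "ra \<le> r t" using range_pos[OF E assms(2)] by simp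
qed

lemma leaves_lower_half_band:
  fixes m :: int
  assumes E: "guided_engagement V k ra r th S"
    and "0 \<le> t1" "th t1 - 2 * pi * m < -(pi/2)"
  obtains t where "0 \<le> t" "th t - 2 * pi * m \<notin> {-pi<..<0}"
proof (rule ccontr)
  assume "\<not> thesis"
  with that have confined: "\<And>t. 0 \<le> t \<Longrightarrow> th t - 2 * pi * m \<in> {-pi<..<0}"
    by blast
  have V: "0 < V" and k: "0 < k" and S: "countable S" using E by (simp_all add: guided_engagement_def)
  define c where "c = - cos (th t1)"
  have "cos (th t1 - 2 * pi * m + pi) > 0"
    using confined[OF assms(2)] assms(3) by (intro cos_gt_zero) auto
  then have "0 < c" by (simp add: c_def cos_add cos_diff)
  moreover have cos_le: "cos (th t) \<le> - c" if "t1 \<le> t" for t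
    using cos_le_while_stuck_below[OF E confined assms(2,3) that] by (simp add: c_def)
  ultimately obtain t3 where "t1 \<le> t3" and far: "\<And>t. t3 \<le> t \<Longrightarrow> ra \<le> r t"
    using eventually_range_ge_ra[OF E assms(2)] by blast
  have "0 \<le> t3" using assms(2) \<open>t1 \<le> t3\<close> by simp
  define T where "T = t3 + pi / (k * V * c)"
  have "0 < k * V * c" using k V \<open>0 < c\<close> by simp
  then have "t3 \<le> T" by (simp add: T_def)
  have "th T - th t3 \<le> (- (k * V * c)) * (T - t3)"
  proof (rule DERIV_le_imp_increment_le_countable[OF \<open>t3 \<le> T\<close> bearing_cont_on[OF E \<open>0 \<le> t3\<close>] S])
    fix x assume x: "x \<in> {t3..T} - S"
    then show "(th has_real_derivative turn_rate k V ra (r x) (th x)) (at x within {t3..T})"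
      by (rule bearing_deriv_on[OF E \<open>0 \<le> t3\<close>])
    have "0 \<le> x" "t1 \<le> x" using x \<open>0 \<le> t3\<close> \<open>t1 \<le> t3\<close> by auto
    have "0 < sin (- (th x - 2 * pi * m))"
      using confined[OF \<open>0 \<le> x\<close>] by (intro sin_gt_zero) auto
    then have "sin (th x - 2 * pi * m) < 0" by (simp only: sin_minus)
    then have "turn_rate k V ra (r x) (th x) < k * V * cos (th x)"
      using far[of x] x range_pos[OF E \<open>0 \<le> x\<close>] E
      by (intro turn_rate_lt_k_cos) (auto simp: sin_diff guided_engagement_def)
    also have "\<dots> \<le> k * V * (- c)"
      using cos_le[OF \<open>t1 \<le> x\<close>] k V by (intro mult_left_mono) simp_all
    finally show "turn_rate k V ra (r x) (th x) \<le> - (k * V * c)" by simp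
  qed
  moreover have "(- (k * V * c)) * (T - t3) = - pi"
    using k V \<open>0 < c\<close> by (simp add: T_def)
  ultimately show False
    using confined[OF \<open>0 \<le> t3\<close>] confined[of T] \<open>0 \<le> t3\<close> \<open>t3 \<le> T\<close> by auto
qed

lemma eventually_in_band:
  assumes E: "guided_engagement V k ra r th S"
  obtains t0 and m :: int where "0 \<le> t0" "th t0 \<in> {2 * pi * m .. 2 * pi * m + pi}"
proof (rule ccontr)
  assume "\<not> thesis"
  then have never: "\<And>t m. 0 \<le> t \<Longrightarrow> th t \<notin> {2 * pi * of_int m .. 2 * pi * of_int m + pi}"
    using that by blast
  obtain m :: int where lower_half: "\<And>t. 0 \<le> t \<Longrightarrow> th t - 2 * pi * m \<in> {-pi<..<0}"
    using confined_if_never_in_band[OF E never] by blast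
  obtain t1 where "0 \<le> t1" "th t1 - 2 * pi * m < -(pi/2)"
    using leaves_fourth_quadrant[OF E lower_half] by blast
  then obtain t where "0 \<le> t" "th t - 2 * pi * m \<notin> {-pi<..<0}"
    using leaves_lower_half_band[OF E] by blast
  with lower_half show False by blast
qed

theorem lemma4:
  fixes V k ra :: real and r th :: "real \<Rightarrow> real" and S :: "real set"
  assumes "V > 0" and "k > 0" and "ra \<ge> 0"
    and "\<forall>t\<ge>0. r t > 0"
    and "continuous_on {0..} r" and "continuous_on {0..} th"
    and "countable S"
    and "\<forall>t\<in>{0..} - S. (r has_real_derivative (- V * cos (th t))) (at t within {0..})"
    and "\<forall>t\<in>{0..} - S. (th has_real_derivative
            (ctrl k V ra (r t) (- V * cos (th t)) + V * sin (th t) / r t)) (at t within {0..})"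
  shows "\<exists>ts\<ge>0. \<forall>t\<ge>ts. bearing (th t) \<in> {0..pi}"
proof -
  have E: "guided_engagement V k ra r th S"
    using assms by (simp add: guided_engagement_def turn_rate_def)
  obtain t0 and m :: int where t0: "0 \<le> t0" and band: "th t0 \<in> {2 * pi * m .. 2 * pi * m + pi}"
    using eventually_in_band[OF E] by blast
  have "bearing (th t) \<in> {0..pi}" if "t0 \<le> t" for t
    by (rule bearing_in_band[OF band_invariant[OF E t0 that band]])
  with t0 show ?thesis by blast
qed

end
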